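(* Consider (CVOP) and its associated convex projection (Pv): compute $Y_a=\operatorname{proj}_y[S_a]$ with $S_a=\{(x,y):x\in\mathcal{X},y\in\Gamma(x)+C\}$. (1) If $\bar X\subseteq\mathcal{X}$ is an infimizer of (CVOP), then $\bar S:=\{(x,y):x\in\bar X,\ y\in\Gamma(x)+C\}$ is a solution of (Pv). (2) If (CVOP) is self-bounded, then (Pv) is self-bounded. If, additionally, (CVOP) is bounded, then $(\operatorname{cl}Y_a)_\infty=\operatorname{cl}C$. (3) Let (CVOP) be bounded or self-bounded and let $\bar X\subseteq\mathcal{X}$ be a finite $\epsilon$-infimizer of (CVOP). Then $\bar S:=\{(x,\Gamma(x)):x\in\bar X\}$ is a finite $\epsilon$-solution of (Pv).
   Context: (CVOP): $\min\Gamma(x)$ w.r.t. $\le_C$ s.t. $x\in\mathcal{X}$, with $C\subseteq\mathbb{R}^m$ a non-trivial pointed solid convex cone, $\mathcal{X}\subseteq\mathbb{R}^n$ convex, $\Gamma$ $C$-convex; upper image $\mathcal{G}=\operatorname{cl}(\Gamma[\mathcal{X}]+C)$. Recession cone $A_\infty=\{y:x+\lambda y\in A\ \forall x\in A,\lambda\ge0\}$. Fix a $p$-norm with closed balls $B_\epsilon$, a direction $c\in\operatorname{int}C$ with $\|c\|=1$ and $\epsilon>0$. (CVOP) is bounded if $\mathcal{G}\subseteq\{q\}+C$ for some $q$; self-bounded if $\mathcal{G}\ne\mathbb{R}^m$ and $\mathcal{G}\subseteq\{q\}+\mathcal{G}_\infty$ for some $q$. $\bar X\subseteq\mathcal{X}$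 is an infimizer if $\mathcal{G}=\operatorname{cl}\operatorname{conv}(\Gamma[\bar X]+C)$. A nonempty finite $\bar X\subseteq\mathcal{X}$ is a finite $\epsilon$-infimizer if $\mathcal{G}\subseteq\operatorname{conv}\Gamma[\bar X]+C-\epsilon\{c\}$ (bounded case), resp. $\mathcal{G}\subseteq\operatorname{conv}\Gamma[\bar X]+\mathcal{G}_\infty-\epsilon\{c\}$ (self-bounded case). For the projection (Pv): a set $\bar S\subseteq S_a$ is a solution if $Y_a\subseteq\operatorname{cl}\operatorname{conv}\operatorname{proj}_y[\bar S]$; (Pv) is self-bounded if $Y_a\ne\mathbb{R}^m$ and $Y_a\subseteq\operatorname{conv}\{y^{(1)},\dots,y^{(k)}\}+(\operatorname{cl}Y_a)_\infty$ for finitely many points; for self-bounded (Pv), a nonempty finite $\bar S\subseteq S_a$ is a finite $\epsilon$-solution if $Y_a\subseteq\operatorname{conv}\operatorname{proj}_y[\bar S]+(\operatorname{cl}Y_a)_\infty+B_\epsilon$. *)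

theory Defs
  imports "HOL-Analysis.Analysis"
begin

definition msum :: "'a::real_vector set \<Rightarrow> 'a set \<Rightarrow> 'a set" where
  "msum A B = {a + b | a b. a \<in> A \<and> b \<in> B}"

definition recc :: "'a::real_vector set \<Rightarrow> 'a set" where
  "recc A = {y. \<forall>x\<in>A. \<forall>l::real. l \<ge> 0 \<longrightarrow> x + l *\<^sub>R y \<in> A}"

definition pnorm :: "ereal \<Rightarrow> real^'m \<Rightarrow> real" where
  "pnorm p y = (if p = \<infinity> then Max (range (\<lambda>i. \<bar>y $ i\<bar>))
                else (\<Sum>i\<in>UNIV. \<bar>y $ i\<bar> powr real_of_ereal p) powr (1 / real_of_ereal p))"

definition pball :: "ereal \<Rightarrow> real \<Rightarrow> (real^'m) set" where
  "pball p e = {y. pnorm p y \<le> e}"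

definition ordering_cone :: "(real^'m) set \<Rightarrow> bool" where
  "ordering_cone C \<longleftrightarrow> convex_cone C \<and> C \<noteq> {0} \<and> C \<noteq> UNIV
     \<and> C \<inter> uminus ` C = {0} \<and> interior C \<noteq> {}"

definition C_convex :: "(real^'m) set \<Rightarrow> (real^'n) set \<Rightarrow> (real^'n \<Rightarrow> real^'m) \<Rightarrow> bool" where
  "C_convex C X \<Gamma> \<longleftrightarrow> (\<forall>x\<in>X. \<forall>x'\<in>X. \<forall>l::real. 0 \<le> l \<and> l \<le> 1 \<longrightarrow>
      l *\<^sub>R \<Gamma> x + (1 - l) *\<^sub>R \<Gamma> x' - \<Gamma> (l *\<^sub>R x + (1 - l) *\<^sub>R x') \<in> C)"

definition upper_image :: "(real^'m) set \<Rightarrow> (real^'n) set \<Rightarrow> (real^'n \<Rightarrow> real^'m) \<Rightarrow> (real^'m) set" where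
  "upper_image C X \<Gamma> = closure (msum (\<Gamma> ` X) C)"

definition cvop_bounded :: "(real^'m) set \<Rightarrow> (real^'n) set \<Rightarrow> (real^'n \<Rightarrow> real^'m) \<Rightarrow> bool" where
  "cvop_bounded C X \<Gamma> \<longleftrightarrow> (\<exists>q. upper_image C X \<Gamma> \<subseteq> msum {q} C)"

definition cvop_self_bounded :: "(real^'m) set \<Rightarrow> (real^'n) set \<Rightarrow> (real^'n \<Rightarrow> real^'m) \<Rightarrow> bool" where
  "cvop_self_bounded C X \<Gamma> \<longleftrightarrow> upper_image C X \<Gamma> \<noteq> UNIV \<and>
     (\<exists>q. upper_image C X \<Gamma> \<subseteq> msum {q} (recc (upper_image C X \<Gamma>)))"

definition infimizer :: "(real^'m) set \<Rightarrow> (real^'n) set \<Rightarrow> (real^'n \<Rightarrow> real^'m) \<Rightarrow> (real^'n) set \<Rightarrow> bool" where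
  "infimizer C X \<Gamma> Xb \<longleftrightarrow> Xb \<subseteq> X \<and>
     upper_image C X \<Gamma> = closure (convex hull (msum (\<Gamma> ` Xb) C))"

definition fin_eps_infimizer_b :: "(real^'m) set \<Rightarrow> (real^'n) set \<Rightarrow> (real^'n \<Rightarrow> real^'m)
    \<Rightarrow> real^'m \<Rightarrow> real \<Rightarrow> (real^'n) set \<Rightarrow> bool" where
  "fin_eps_infimizer_b C X \<Gamma> c e Xb \<longleftrightarrow> Xb \<noteq> {} \<and> finite Xb \<and> Xb \<subseteq> X \<and>
     upper_image C X \<Gamma> \<subseteq> msum (msum (convex hull (\<Gamma> ` Xb)) C) {- e *\<^sub>R c}"

definition fin_eps_infimizer_sb :: "(real^'m) set \<Rightarrow> (real^'n) set \<Rightarrow> (real^'n \<Rightarrow> real^'m)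
    \<Rightarrow> real^'m \<Rightarrow> real \<Rightarrow> (real^'n) set \<Rightarrow> bool" where
  "fin_eps_infimizer_sb C X \<Gamma> c e Xb \<longleftrightarrow> Xb \<noteq> {} \<and> finite Xb \<and> Xb \<subseteq> X \<and>
     upper_image C X \<Gamma> \<subseteq>
       msum (msum (convex hull (\<Gamma> ` Xb)) (recc (upper_image C X \<Gamma>))) {- e *\<^sub>R c}"

definition S_a :: "(real^'m) set \<Rightarrow> (real^'n) set \<Rightarrow> (real^'n \<Rightarrow> real^'m) \<Rightarrow> ((real^'n) \<times> (real^'m)) set" where
  "S_a C X \<Gamma> = {(x, y). x \<in> X \<and> y \<in> msum {\<Gamma> x} C}"

definition Y_a :: "(real^'m) set \<Rightarrow> (real^'n) set \<Rightarrow> (real^'n \<Rightarrow> real^'m) \<Rightarrow> (real^'m) set" where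
  "Y_a C X \<Gamma> = snd ` S_a C X \<Gamma>"

definition pv_solution :: "(real^'m) set \<Rightarrow> (real^'n) set \<Rightarrow> (real^'n \<Rightarrow> real^'m)
    \<Rightarrow> ((real^'n) \<times> (real^'m)) set \<Rightarrow> bool" where
  "pv_solution C X \<Gamma> Sb \<longleftrightarrow> Sb \<subseteq> S_a C X \<Gamma> \<and>
     Y_a C X \<Gamma> \<subseteq> closure (convex hull (snd ` Sb))"

definition pv_self_bounded :: "(real^'m) set \<Rightarrow> (real^'n) set \<Rightarrow> (real^'n \<Rightarrow> real^'m) \<Rightarrow> bool" where
  "pv_self_bounded C X \<Gamma> \<longleftrightarrow> Y_a C X \<Gamma> \<noteq> UNIV \<and>
     (\<exists>P. finite P \<and> Y_a C X \<Gamma> \<subseteq> msum (convex hull P) (recc (closure (Y_a C X \<Gamma>))))"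

definition pv_fin_eps_solution :: "ereal \<Rightarrow> (real^'m) set \<Rightarrow> (real^'n) set \<Rightarrow> (real^'n \<Rightarrow> real^'m)
    \<Rightarrow> real \<Rightarrow> ((real^'n) \<times> (real^'m)) set \<Rightarrow> bool" where
  "pv_fin_eps_solution p C X \<Gamma> e Sb \<longleftrightarrow> pv_self_bounded C X \<Gamma> \<and>
     Sb \<noteq> {} \<and> finite Sb \<and> Sb \<subseteq> S_a C X \<Gamma> \<and>
     Y_a C X \<Gamma> \<subseteq> msum (msum (convex hull (snd ` Sb)) (recc (closure (Y_a C X \<Gamma>)))) (pball p e)"

end

theory Submission
  imports Defs
begin

text \<open>Everything reduces to the identities Y_a = \<Gamma>[X] + C and cl Y_a = G, together with the
  two inclusions cl C \<subseteq> recc G (the cone can always be added to the upper image G) and,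
  for bounded problems, recc G \<subseteq> cl C (if G \<subseteq> q + C, x \<in> G and y \<in> recc G, then
  x + t y - q \<in> C for all t \<ge> 0, and dividing by t exhibits y as a limit of points of C).
  The shift -\<epsilon> c lies in the \<epsilon>-ball because c has norm 1.\<close>

lemma msum_singleton_iff: "x \<in> msum {q} C \<longleftrightarrow> x - q \<in> C"
  unfolding msum_def by force

lemma snd_image_fibres_msum:
  "snd ` {(x, y). x \<in> A \<and> y \<in> msum {\<Gamma> x} C} = msum (\<Gamma> ` A) C"
  unfolding msum_def image_def by auto

lemma Y_a_eq_msum: "Y_a C X \<Gamma> = msum (\<Gamma> ` X) C"
  unfolding Y_a_def S_a_def by (rule snd_image_fibres_msum)

lemma closure_Y_a: "closure (Y_a C X \<Gamma>) = upper_image C X \<Gamma>"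
  by (simp add: Y_a_eq_msum upper_image_def)

lemma Y_a_subset_upper_image: "Y_a C X \<Gamma> \<subseteq> upper_image C X \<Gamma>"
  using closure_Y_a closure_subset by metis

lemma closure_msum_cone_add:
  fixes A C :: "'a::real_normed_vector set"
  assumes "convex_cone C" "x \<in> closure (msum A C)" "w \<in> C"
  shows "x + w \<in> closure (msum A C)"
proof -
  have "(+) w ` msum A C \<subseteq> msum A C"
  proof (clarsimp simp: msum_def)
    fix a b assume "a \<in> A" "b \<in> C"
    then show "\<exists>a' b'. w + (a + b) = a' + b' \<and> a' \<in> A \<and> b' \<in> C"
      using convex_cone_add[OF assms(1) assms(3)] by (metis add.left_commute)
  qed
  then have "(+) w ` closure (msum A C) \<subseteq> closure (msum A C)"
    by (metis closure_mono closure_translation)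
  then show ?thesis
    using assms(2) by (auto simp: add.commute)
qed

lemma closure_cone_subset_recc_closure_msum:
  fixes A C :: "'a::real_normed_vector set"
  assumes cone: "convex_cone C"
  shows "closure C \<subseteq> recc (closure (msum A C))"
  unfolding recc_def
proof (intro subsetI CollectI ballI allI impI)
  fix y x and l :: real
  assume y: "y \<in> closure C" and x: "x \<in> closure (msum A C)" and l: "0 \<le> l"
  have "closed {v. x + l *\<^sub>R v \<in> closure (msum A C)}"
    using continuous_closed_vimage[of "closure (msum A C)" "\<lambda>v. x + l *\<^sub>R v"]
    by (simp add: vimage_def continuous_intros)
  moreover have "C \<subseteq> {v. x + l *\<^sub>R v \<in> closure (msum A C)}"
    using closure_msum_cone_add[OF cone x] convex_cone_scaleR[OF cone l] by blast
  ultimately show "x + l *\<^sub>R y \<in> closure (msum A C)"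
    using closure_minimal y by blast
qed

lemma cone_subset_recc_upper_image:
  "convex_cone C \<Longrightarrow> C \<subseteq> recc (upper_image C X \<Gamma>)"
  unfolding upper_image_def
  using closure_cone_subset_recc_closure_msum closure_subset by blast

lemma recc_subset_closure_cone:
  fixes S C :: "'a::real_normed_vector set"
  assumes "conic C" "x \<in> S" "S \<subseteq> msum {q} C"
  shows "recc S \<subseteq> closure C"
proof
  fix y assume y: "y \<in> recc S"
  define f where "f = (\<lambda>n. inverse (real (Suc n)) *\<^sub>R (x - q) + y)"
  have "f n \<in> C" for n
  proof -
    have "x + real (Suc n) *\<^sub>R y \<in> S"
      using y assms(2) unfolding recc_def by simp
    then have "x + real (Suc n) *\<^sub>R y - q \<in> C"
      using assms(3) msum_singleton_iff by blast
    then have "inverse (real (Suc n)) *\<^sub>R (x + real (Suc n) *\<^sub>R y - q) \<in> C"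
      by (rule conic_mul[OF assms(1)]) simp
    moreover have "inverse (real (Suc n)) *\<^sub>R (x + real (Suc n) *\<^sub>R y - q) = f n"
      unfolding f_def by (simp add: scaleR_add_right scaleR_diff_right algebra_simps del: of_nat_Suc)
    ultimately show ?thesis
      by simp
  qed
  moreover have "f \<longlonglongrightarrow> y"
    unfolding f_def using tendsto_add[OF tendsto_scaleR[OF LIMSEQ_inverse_real_of_nat tendsto_const]
        tendsto_const, of "x - q" y]
    by simp
  ultimately show "y \<in> closure C"
    unfolding closure_sequential by blast
qed

lemma pnorm_scaleR:
  assumes "p \<ge> 1"
  shows "pnorm p (a *\<^sub>R y) = \<bar>a\<bar> * pnorm p y"
proof (cases "p = \<infinity>")
  case True
  have "Max ((\<lambda>t. \<bar>a\<bar> * t) ` range (\<lambda>i. \<bar>y $ i\<bar>)) = \<bar>a\<bar> * Max (range (\<lambda>i. \<bar>y $ i\<bar>))"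
    by (rule mono_Max_commute[symmetric]) (auto simp: mono_def mult_left_mono)
  then show ?thesis
    using True by (simp add: pnorm_def image_image abs_mult)
next
  case False
  define r where "r = real_of_ereal p"
  have r: "r \<ge> 1"
    using assms False unfolding r_def by (cases p) auto
  have pnorm_r: "pnorm p z = (\<Sum>i\<in>UNIV. \<bar>z $ i\<bar> powr r) powr (1 / r)" for z
    using False unfolding pnorm_def r_def by (simp only: if_False)
  have "(\<Sum>i\<in>UNIV. \<bar>(a *\<^sub>R y) $ i\<bar> powr r) = \<bar>a\<bar> powr r * (\<Sum>i\<in>UNIV. \<bar>y $ i\<bar> powr r)"
    by (simp add: abs_mult powr_mult sum_distrib_left)
  then have "pnorm p (a *\<^sub>R y) = (\<bar>a\<bar> powr r) powr (1 / r) * pnorm p y"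
    unfolding pnorm_r by (rule ssubst) (rule powr_mult; simp add: sum_nonneg)
  also have "(\<bar>a\<bar> powr r) powr (1 / r) = \<bar>a\<bar>"
    using r by (simp add: powr_powr)
  finally show ?thesis .
qed

lemma cvop_bounded_imp_self_bounded:
  assumes "convex_cone C" "C \<noteq> UNIV" "cvop_bounded C X \<Gamma>"
  shows "cvop_self_bounded C X \<Gamma>"
proof -
  obtain q where q: "upper_image C X \<Gamma> \<subseteq> msum {q} C"
    using assms(3) unfolding cvop_bounded_def by blast
  have "upper_image C X \<Gamma> \<noteq> UNIV"
  proof
    assume "upper_image C X \<Gamma> = UNIV"
    then have "z + q \<in> msum {q} C" for z
      using q by blast
    then show False
      using assms(2) unfolding msum_singleton_iff by auto
  qed
  moreover have "upper_image C X \<Gamma> \<subseteq> msum {q} (recc (upper_image C X \<Gamma>))"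
    using q cone_subset_recc_upper_image[OF assms(1)] unfolding msum_def by blast
  ultimately show ?thesis
    unfolding cvop_self_bounded_def by blast
qed

lemma cvop_self_bounded_imp_pv_self_bounded:
  assumes "cvop_self_bounded C X \<Gamma>"
  shows "pv_self_bounded C X \<Gamma>"
proof -
  obtain q where "upper_image C X \<Gamma> \<subseteq> msum {q} (recc (upper_image C X \<Gamma>))"
    using assms unfolding cvop_self_bounded_def by blast
  then have "Y_a C X \<Gamma> \<subseteq> msum (convex hull {q}) (recc (closure (Y_a C X \<Gamma>)))"
    using Y_a_subset_upper_image[of C X \<Gamma>] unfolding closure_Y_a convex_hull_singleton
    by (meson order_trans)
  moreover have "Y_a C X \<Gamma> \<noteq> UNIV"
    using assms Y_a_subset_upper_image unfolding cvop_self_bounded_def by blast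
  ultimately show ?thesis
    unfolding pv_self_bounded_def by blast
qed

lemma fin_eps_infimizer_b_imp_sb:
  "convex_cone C \<Longrightarrow> fin_eps_infimizer_b C X \<Gamma> c e Xb \<Longrightarrow> fin_eps_infimizer_sb C X \<Gamma> c e Xb"
  unfolding fin_eps_infimizer_b_def fin_eps_infimizer_sb_def
  using cone_subset_recc_upper_image unfolding msum_def by blast

lemma fin_eps_infimizer_sb_imp_pv_fin_eps_solution:
  assumes "convex_cone C" "p \<ge> 1" "pnorm p c = 1" "e > 0"
    and "cvop_self_bounded C X \<Gamma>" "fin_eps_infimizer_sb C X \<Gamma> c e Xb"
  shows "pv_fin_eps_solution p C X \<Gamma> e ((\<lambda>x. (x, \<Gamma> x)) ` Xb)"
proof -
  have shift: "- e *\<^sub>R c \<in> pball p e"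
    using assms(3,4) pnorm_scaleR[OF assms(2), of "- e" c] by (simp add: pball_def)
  have "(\<lambda>x. (x, \<Gamma> x)) ` Xb \<subseteq> S_a C X \<Gamma>"
    using assms(6) convex_cone_contains_0[OF assms(1)]
    unfolding fin_eps_infimizer_sb_def S_a_def msum_def by force
  moreover have "Y_a C X \<Gamma> \<subseteq>
      msum (msum (convex hull (\<Gamma> ` Xb)) (recc (upper_image C X \<Gamma>))) (pball p e)"
    using assms(6) Y_a_subset_upper_image shift
    unfolding fin_eps_infimizer_sb_def msum_def by blast
  ultimately show ?thesis
    using assms(6) cvop_self_bounded_imp_pv_self_bounded[OF assms(5)]
    unfolding pv_fin_eps_solution_def fin_eps_infimizer_sb_def closure_Y_a
    by (simp add: image_image)
qed

theorem mainTheorem11: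
  fixes C :: "(real^'m) set" and X :: "(real^'n) set" and \<Gamma> :: "real^'n \<Rightarrow> real^'m"
    and p :: ereal and c :: "real^'m" and e :: real
  assumes cone: "ordering_cone C"
    and Xconv: "convex X" and Xne: "X \<noteq> {}"
    and Gconv: "C_convex C X \<Gamma>"
    and p: "p \<ge> 1"
    and c: "c \<in> interior C" "pnorm p c = 1"
    and e: "e > 0"
  shows "(\<forall>Xb. infimizer C X \<Gamma> Xb \<longrightarrow>
            pv_solution C X \<Gamma> {(x, y). x \<in> Xb \<and> y \<in> msum {\<Gamma> x} C})
       \<and> (cvop_self_bounded C X \<Gamma> \<longrightarrow>
            pv_self_bounded C X \<Gamma>
            \<and> (cvop_bounded C X \<Gamma> \<longrightarrow> recc (closure (Y_a C X \<Gamma>)) = closure C))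
       \<and> (\<forall>Xb. (cvop_bounded C X \<Gamma> \<and> fin_eps_infimizer_b C X \<Gamma> c e Xb)
               \<or> (cvop_self_bounded C X \<Gamma> \<and> fin_eps_infimizer_sb C X \<Gamma> c e Xb) \<longrightarrow>
            pv_fin_eps_solution p C X \<Gamma> e ((\<lambda>x. (x, \<Gamma> x)) ` Xb))"
proof -
  have cc: "convex_cone C" and CU: "C \<noteq> UNIV"
    using cone unfolding ordering_cone_def by auto
  show ?thesis
  proof (intro conjI allI impI)
    fix Xb assume "infimizer C X \<Gamma> Xb"
    then show "pv_solution C X \<Gamma> {(x, y). x \<in> Xb \<and> y \<in> msum {\<Gamma> x} C}"
      using Y_a_subset_upper_image[of C X \<Gamma>]
      unfolding pv_solution_def infimizer_def snd_image_fibres_msum S_a_def by auto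
  next
    show "pv_self_bounded C X \<Gamma>" if "cvop_self_bounded C X \<Gamma>"
      using that by (rule cvop_self_bounded_imp_pv_self_bounded)
  next
    assume "cvop_bounded C X \<Gamma>"
    then obtain q where q: "upper_image C X \<Gamma> \<subseteq> msum {q} C"
      unfolding cvop_bounded_def by blast
    obtain x where x: "x \<in> upper_image C X \<Gamma>"
      using Xne Y_a_subset_upper_image convex_cone_contains_0[OF cc]
      unfolding Y_a_eq_msum msum_def by blast
    have "recc (upper_image C X \<Gamma>) \<subseteq> closure C"
      using cc recc_subset_closure_cone[OF _ x q] by (simp add: convex_cone_def)
    moreover have "closure C \<subseteq> recc (upper_image C X \<Gamma>)"
      unfolding upper_image_def by (rule closure_cone_subset_recc_closure_msum[OF cc])
    ultimately show "recc (closure (Y_a C X \<Gamma>)) = closure C"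
      unfolding closure_Y_a by (rule subset_antisym)
  next
    fix Xb
    assume "(cvop_bounded C X \<Gamma> \<and> fin_eps_infimizer_b C X \<Gamma> c e Xb)
          \<or> (cvop_self_bounded C X \<Gamma> \<and> fin_eps_infimizer_sb C X \<Gamma> c e Xb)"
    then have "cvop_self_bounded C X \<Gamma>" "fin_eps_infimizer_sb C X \<Gamma> c e Xb"
      using cvop_bounded_imp_self_bounded[OF cc CU] fin_eps_infimizer_b_imp_sb[OF cc] by blast+
    then show "pv_fin_eps_solution p C X \<Gamma> e ((\<lambda>x. (x, \<Gamma> x)) ` Xb)"
      by (rule fin_eps_infimizer_sb_imp_pv_fin_eps_solution[OF cc p c(2) e])
  qed
qed

end
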